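(* Let $(X,d^\star)$ be a complete $\star$-metric space and $M\subseteq X$ nonempty. Then the subspace $(M,d^\star|_{M\times M})$ is complete if and only if $M$ is closed in $X$.
   Context: A $t$-definer is a function $\star:[0,\infty)\times[0,\infty)\to[0,\infty)$ such that for all $a,b,c\ge 0$: $a\star b=b\star a$; $a\star(b\star c)=(a\star b)\star c$; if $a\le b$ then $a\star c\le b\star c$; $a\star 0=a$; and $\star$ is continuous in its first variable with respect to the Euclidean topology. Given a nonempty set $X$ and a $t$-definer $\star$, a $\star$-metric on $X$ is a function $d^\star:X\times X\to[0,\infty)$ such that for all $x,y,z\in X$: $d^\star(x,y)=0$ iff $x=y$; $d^\star(x,y)=d^\star(y,x)$; and $d^\star(x,y)\le d^\star(x,z)\star d^\star(z,y)$. Closedness refers to the topology consisting of all $U\subseteq X$ such that for each $a\in U$ there is $r>0$ with $\{x: d^\star(a,x)<r\}\subseteq U$. A sequence $\{x_n\}$ is Cauchy if for every $\epsilon>0$ there is $k$ with $d^\star(x_n,x_m)<\epsilon$ for all $m,n\ge k$; it converges to $x$ if for every $\epsilon>0$ there is $k$ with $d^\star(x,x_n)<\epsilon$ for $n\ge k$. A $\star$-metric space is complete if every Cauchy sequence in it converges to a point of the space. *)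

theory Defs
  imports "HOL-Analysis.Analysis"
begin

text \<open>A t-definer: a binary operation on [0,\<infinity>) (represented on real, relativised to nonnegatives).\<close>
definition t_definer :: "(real \<Rightarrow> real \<Rightarrow> real) \<Rightarrow> bool" where
  "t_definer st \<longleftrightarrow>
     (\<forall>a\<ge>0. \<forall>b\<ge>0. st a b \<ge> 0) \<and>
     (\<forall>a\<ge>0. \<forall>b\<ge>0. st a b = st b a) \<and>
     (\<forall>a\<ge>0. \<forall>b\<ge>0. \<forall>c\<ge>0. st a (st b c) = st (st a b) c) \<and>
     (\<forall>a\<ge>0. \<forall>b\<ge>0. \<forall>c\<ge>0. a \<le> b \<longrightarrow> st a c \<le> st b c) \<and>
     (\<forall>a\<ge>0. st a 0 = a) \<and>
     (\<forall>b\<ge>0. continuous_on {0..} (\<lambda>a. st a b))"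

definition star_metric :: "'a set \<Rightarrow> (real \<Rightarrow> real \<Rightarrow> real) \<Rightarrow> ('a \<Rightarrow> 'a \<Rightarrow> real) \<Rightarrow> bool" where
  "star_metric X st d \<longleftrightarrow>
     (\<forall>x\<in>X. \<forall>y\<in>X. d x y \<ge> 0) \<and>
     (\<forall>x\<in>X. \<forall>y\<in>X. d x y = 0 \<longleftrightarrow> x = y) \<and>
     (\<forall>x\<in>X. \<forall>y\<in>X. d x y = d y x) \<and>
     (\<forall>x\<in>X. \<forall>y\<in>X. \<forall>z\<in>X. d x y \<le> st (d x z) (d z y))"

definition star_open :: "'a set \<Rightarrow> ('a \<Rightarrow> 'a \<Rightarrow> real) \<Rightarrow> 'a set \<Rightarrow> bool" where
  "star_open X d U \<longleftrightarrow> U \<subseteq> X \<and> (\<forall>a\<in>U. \<exists>r>0. {x\<in>X. d a x < r} \<subseteq> U)"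

definition star_closed :: "'a set \<Rightarrow> ('a \<Rightarrow> 'a \<Rightarrow> real) \<Rightarrow> 'a set \<Rightarrow> bool" where
  "star_closed X d M \<longleftrightarrow> M \<subseteq> X \<and> star_open X d (X - M)"

definition star_cauchy :: "'a set \<Rightarrow> ('a \<Rightarrow> 'a \<Rightarrow> real) \<Rightarrow> (nat \<Rightarrow> 'a) \<Rightarrow> bool" where
  "star_cauchy S d x \<longleftrightarrow> (\<forall>n. x n \<in> S) \<and>
     (\<forall>\<epsilon>>0. \<exists>k. \<forall>m\<ge>k. \<forall>n\<ge>k. d (x n) (x m) < \<epsilon>)"

definition star_converges :: "('a \<Rightarrow> 'a \<Rightarrow> real) \<Rightarrow> (nat \<Rightarrow> 'a) \<Rightarrow> 'a \<Rightarrow> bool" where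
  "star_converges d x l \<longleftrightarrow> (\<forall>\<epsilon>>0. \<exists>k. \<forall>n\<ge>k. d l (x n) < \<epsilon>)"

definition star_complete :: "'a set \<Rightarrow> ('a \<Rightarrow> 'a \<Rightarrow> real) \<Rightarrow> bool" where
  "star_complete S d \<longleftrightarrow> (\<forall>x. star_cauchy S d x \<longrightarrow> (\<exists>l\<in>S. star_converges d x l))"

end

theory Submission
  imports Defs
begin

text \<open>Continuity of \<open>\<star>\<close> in its first argument at \<open>0\<close>, together with \<open>0 \<star> b = b\<close> and
  monotonicity, makes \<open>a \<star> b\<close> small whenever \<open>a\<close> and \<open>b\<close> are. So the \<open>\<star>\<close>-triangle inequality
  still shows that convergent sequences are Cauchy and that limits are unique, and closedness of
  \<open>M\<close> is equivalent to \<open>M\<close> containing the limits of its convergent sequences. From there the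
  classical metric-space argument applies verbatim.\<close>

lemma t_definer_less_if_small:
  assumes "t_definer st" and "e > 0"
  obtains \<delta> where "\<delta> > 0" and "\<And>a b. 0 \<le> a \<Longrightarrow> 0 \<le> b \<Longrightarrow> a < \<delta> \<Longrightarrow> b < \<delta> \<Longrightarrow> st a b < e"
proof -
  have comm: "\<And>a b. a \<ge> 0 \<Longrightarrow> b \<ge> 0 \<Longrightarrow> st a b = st b a"
    and mono: "\<And>a b c. a \<ge> 0 \<Longrightarrow> b \<ge> 0 \<Longrightarrow> c \<ge> 0 \<Longrightarrow> a \<le> b \<Longrightarrow> st a c \<le> st b c"
    and zero: "\<And>a. a \<ge> 0 \<Longrightarrow> st a 0 = a"
    and cont: "\<And>b. b \<ge> 0 \<Longrightarrow> continuous_on {0..} (\<lambda>a. st a b)"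
    using assms(1) unfolding t_definer_def by auto
  have half: "e/2 \<ge> 0" using assms(2) by simp
  have "st 0 (e/2) = e/2" using comm[of 0 "e/2"] zero[OF half] half by simp
  moreover obtain \<delta>\<^sub>0 where "\<delta>\<^sub>0 > 0"
    and \<delta>\<^sub>0: "\<And>a. a \<ge> 0 \<Longrightarrow> dist a 0 < \<delta>\<^sub>0 \<Longrightarrow> dist (st a (e/2)) (st 0 (e/2)) < e/2"
    using cont[OF half] assms(2) unfolding continuous_on_iff
    by (metis atLeast_iff half_gt_zero order_refl)
  ultimately have near0: "st a (e/2) < e" if "0 \<le> a" "a < \<delta>\<^sub>0" for a
  proof -
    have "\<bar>st a (e/2) - e/2\<bar> < e/2"
      using \<delta>\<^sub>0[of a] that \<open>st 0 (e/2) = e/2\<close> by (simp add: dist_real_def)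
    then show ?thesis by linarith
  qed
  show ?thesis
  proof
    show "min \<delta>\<^sub>0 (e/2) > 0" using \<open>\<delta>\<^sub>0 > 0\<close> assms(2) by simp
    fix a b :: real
    assume "0 \<le> a" "0 \<le> b" "a < min \<delta>\<^sub>0 (e/2)" "b < min \<delta>\<^sub>0 (e/2)"
    moreover define m where "m = max a b"
    ultimately have "0 \<le> m" "m < \<delta>\<^sub>0" "a \<le> m" "b \<le> e/2" by auto
    have "st a b \<le> st m b" using mono \<open>0 \<le> a\<close> \<open>0 \<le> b\<close> \<open>0 \<le> m\<close> \<open>a \<le> m\<close> by blast
    also have "\<dots> = st b m" using comm \<open>0 \<le> b\<close> \<open>0 \<le> m\<close> by blast
    also have "\<dots> \<le> st (e/2) m" using mono \<open>0 \<le> b\<close> half \<open>0 \<le> m\<close> \<open>b \<le> e/2\<close> by blast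
    also have "\<dots> = st m (e/2)" using comm \<open>0 \<le> m\<close> half by blast
    also have "\<dots> < e" using near0 \<open>0 \<le> m\<close> \<open>m < \<delta>\<^sub>0\<close> by blast
    finally show "st a b < e" .
  qed
qed

lemma star_metric_nonneg: "star_metric X st d \<Longrightarrow> x \<in> X \<Longrightarrow> y \<in> X \<Longrightarrow> 0 \<le> d x y"
  by (simp add: star_metric_def)

lemma star_metric_eq_0_iff: "star_metric X st d \<Longrightarrow> x \<in> X \<Longrightarrow> y \<in> X \<Longrightarrow> d x y = 0 \<longleftrightarrow> x = y"
  by (simp add: star_metric_def)

lemma star_metric_sym: "star_metric X st d \<Longrightarrow> x \<in> X \<Longrightarrow> y \<in> X \<Longrightarrow> d x y = d y x"
  by (simp add: star_metric_def)

lemma star_metric_triangle: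
  "star_metric X st d \<Longrightarrow> x \<in> X \<Longrightarrow> y \<in> X \<Longrightarrow> z \<in> X \<Longrightarrow> d x y \<le> st (d x z) (d z y)"
  unfolding star_metric_def by blast

lemma star_metric_less_if_near_common_point:
  assumes "t_definer st" and "star_metric X st d" and "e > 0"
  obtains \<delta> where "\<delta> > 0"
    and "\<And>x y z. x \<in> X \<Longrightarrow> y \<in> X \<Longrightarrow> z \<in> X \<Longrightarrow> d z x < \<delta> \<Longrightarrow> d z y < \<delta> \<Longrightarrow> d x y < e"
proof -
  obtain \<delta> where "\<delta> > 0" and small: "\<And>a b. 0 \<le> a \<Longrightarrow> 0 \<le> b \<Longrightarrow> a < \<delta> \<Longrightarrow> b < \<delta> \<Longrightarrow> st a b < e"
    using t_definer_less_if_small[OF assms(1,3)] by blast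
  have "d x y < e" if "x \<in> X" "y \<in> X" "z \<in> X" "d z x < \<delta>" "d z y < \<delta>" for x y z
  proof -
    have "d x y \<le> st (d x z) (d z y)"
      using star_metric_triangle[OF assms(2) that(1-3)] .
    also have "\<dots> = st (d z x) (d z y)"
      using star_metric_sym[OF assms(2) that(1,3)] by simp
    also have "\<dots> < e"
      using small star_metric_nonneg[OF assms(2)] that by blast
    finally show ?thesis .
  qed
  with \<open>\<delta> > 0\<close> show ?thesis using that by blast
qed

lemma star_converges_imp_cauchy:
  assumes "t_definer st" and "star_metric X st d"
    and "\<And>n. x n \<in> X" and "l \<in> X" and "star_converges d x l"
  shows "star_cauchy X d x"
  unfolding star_cauchy_def
proof (intro conjI allI impI)
  show "x n \<in> X" for n by fact
  fix e :: real
  assume "e > 0"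
  then obtain \<delta> where "\<delta> > 0" and near: "\<And>x y z. x \<in> X \<Longrightarrow> y \<in> X \<Longrightarrow> z \<in> X \<Longrightarrow>
      d z x < \<delta> \<Longrightarrow> d z y < \<delta> \<Longrightarrow> d x y < e"
    using star_metric_less_if_near_common_point[OF assms(1,2)] by blast
  then obtain k where "\<forall>n\<ge>k. d l (x n) < \<delta>"
    using assms(5) unfolding star_converges_def by blast
  then have "\<forall>m\<ge>k. \<forall>n\<ge>k. d (x n) (x m) < e"
    using near assms(3,4) by blast
  then show "\<exists>k. \<forall>m\<ge>k. \<forall>n\<ge>k. d (x n) (x m) < e" ..
qed

lemma star_converges_unique:
  assumes "t_definer st" and "star_metric X st d" and "\<And>n. x n \<in> X" and "l \<in> X" and "l' \<in> X"
    and "star_converges d x l" and "star_converges d x l'"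
  shows "l = l'"
proof (rule ccontr)
  assume "l \<noteq> l'"
  then have "d l l' > 0"
    using star_metric_nonneg[OF assms(2,4,5)] star_metric_eq_0_iff[OF assms(2,4,5)] by linarith
  then obtain \<delta> where "\<delta> > 0" and near: "\<And>x y z. x \<in> X \<Longrightarrow> y \<in> X \<Longrightarrow> z \<in> X \<Longrightarrow>
      d z x < \<delta> \<Longrightarrow> d z y < \<delta> \<Longrightarrow> d x y < d l l'"
    using star_metric_less_if_near_common_point[OF assms(1,2)] by blast
  obtain k k' where "\<forall>n\<ge>k. d l (x n) < \<delta>" and "\<forall>n\<ge>k'. d l' (x n) < \<delta>"
    using assms(6,7) \<open>\<delta> > 0\<close> unfolding star_converges_def by meson
  then have "d (x (max k k')) l < \<delta>" and "d (x (max k k')) l' < \<delta>"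
    using star_metric_sym[OF assms(2)] assms(3-5) by auto
  then show False using near[OF assms(4,5,3)] by blast
qed

lemma star_closed_iff_sequentially_closed:
  assumes "M \<subseteq> X"
  shows "star_closed X d M \<longleftrightarrow> (\<forall>x l. (\<forall>n. x n \<in> M) \<longrightarrow> l \<in> X \<longrightarrow> star_converges d x l \<longrightarrow> l \<in> M)"
    (is "_ \<longleftrightarrow> ?seq_closed")
proof
  assume closed: "star_closed X d M"
  show ?seq_closed
  proof (intro allI impI)
    fix x l
    assume x: "\<forall>n. x n \<in> M" and "l \<in> X" and conv: "star_converges d x l"
    show "l \<in> M"
    proof (rule ccontr)
      assume "l \<notin> M"
      then obtain r where "r > 0" and ball: "{y \<in> X. d l y < r} \<subseteq> X - M"
        using closed \<open>l \<in> X\<close> unfolding star_closed_def star_open_def by blast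
      obtain k where "d l (x k) < r"
        using conv \<open>r > 0\<close> unfolding star_converges_def by blast
      then have "x k \<in> X - M" using ball x assms by blast
      then show False using x by blast
    qed
  qed
next
  assume seq_closed: ?seq_closed
  have "\<exists>r>0. {y \<in> X. d a y < r} \<subseteq> X - M" if "a \<in> X" "a \<notin> M" for a
  proof (rule ccontr)
    assume no_ball: "\<not> ?thesis"
    have "\<exists>y\<in>M. d a y < inverse (Suc n)" for n
    proof -
      have "inverse (real (Suc n)) > 0" by simp
      then have "\<not> {y \<in> X. d a y < inverse (Suc n)} \<subseteq> X - M" using no_ball by blast
      then show ?thesis by blast
    qed
    then obtain x where "\<And>n. x n \<in> M" and x: "\<And>n. d a (x n) < inverse (Suc n)"
      by metis
    have "star_converges d x a"
      unfolding star_converges_def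
    proof (intro allI impI)
      fix e :: real
      assume "e > 0"
      then obtain k where k: "inverse (Suc k) < e" using reals_Archimedean by blast
      have "d a (x n) < e" if "n \<ge> k" for n
      proof -
        have "inverse (real (Suc n)) \<le> inverse (Suc k)"
          by (rule le_imp_inverse_le) (use that in auto)
        then show ?thesis using x[of n] k by linarith
      qed
      then show "\<exists>k. \<forall>n\<ge>k. d a (x n) < e" by blast
    qed
    then show False using seq_closed \<open>\<And>n. x n \<in> M\<close> that by blast
  qed
  then show "star_closed X d M"
    using assms unfolding star_closed_def star_open_def by blast
qed

lemma star_complete_restrict_iff:
  "star_complete M (\<lambda>x y. if x \<in> M \<and> y \<in> M then d x y else 0) \<longleftrightarrow> star_complete M d"
    (is "star_complete M ?d_M \<longleftrightarrow> _")
proof -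
  have cauchy: "star_cauchy M ?d_M x \<longleftrightarrow> star_cauchy M d x" for x
    unfolding star_cauchy_def by auto
  have conv: "star_converges ?d_M x l \<longleftrightarrow> star_converges d x l" if "star_cauchy M d x" "l \<in> M" for x l
    using that unfolding star_cauchy_def star_converges_def by simp
  show ?thesis
    unfolding star_complete_def using cauchy conv by blast
qed

lemma star_complete_subset_iff_closed:
  assumes "t_definer st" and "star_metric X st d" and "star_complete X d" and "M \<subseteq> X"
  shows "star_complete M d \<longleftrightarrow> star_closed X d M"
proof
  assume complete_M: "star_complete M d"
  have "l \<in> M" if x: "\<And>n. x n \<in> M" and "l \<in> X" and conv: "star_converges d x l" for x l
  proof -
    have "star_cauchy M d x"
      using star_converges_imp_cauchy[OF assms(1,2) _ \<open>l \<in> X\<close> conv] x assms(4)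
      unfolding star_cauchy_def by blast
    then obtain l' where "l' \<in> M" and "star_converges d x l'"
      using complete_M unfolding star_complete_def by blast
    then have "l = l'"
      using star_converges_unique[OF assms(1,2) _ \<open>l \<in> X\<close>] conv x assms(4) by blast
    with \<open>l' \<in> M\<close> show ?thesis by simp
  qed
  then show "star_closed X d M"
    using star_closed_iff_sequentially_closed[OF assms(4)] by blast
next
  assume "star_closed X d M"
  then have seq_closed: "\<And>x l. \<forall>n. x n \<in> M \<Longrightarrow> l \<in> X \<Longrightarrow> star_converges d x l \<Longrightarrow> l \<in> M"
    using star_closed_iff_sequentially_closed[OF assms(4)] by blast
  show "star_complete M d"
    unfolding star_complete_def
  proof (intro allI impI)
    fix x
    assume "star_cauchy M d x"
    then have "star_cauchy X d x" and "\<forall>n. x n \<in> M"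
      using assms(4) unfolding star_cauchy_def by blast+
    then obtain l where "l \<in> X" and "star_converges d x l"
      using assms(3) unfolding star_complete_def by blast
    then show "\<exists>l\<in>M. star_converges d x l" using seq_closed \<open>\<forall>n. x n \<in> M\<close> by blast
  qed
qed

theorem theorem4p11:
  fixes X M :: "'a set" and st :: "real \<Rightarrow> real \<Rightarrow> real" and d :: "'a \<Rightarrow> 'a \<Rightarrow> real"
  assumes "t_definer st"
    and "star_metric X st d"
    and "star_complete X d"
    and "M \<subseteq> X" and "M \<noteq> {}"
  shows "star_complete M (\<lambda>x y. if x \<in> M \<and> y \<in> M then d x y else 0) \<longleftrightarrow> star_closed X d M"
  using star_complete_restrict_iff star_complete_subset_iff_closed[OF assms(1-4)] by blast

end
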